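(* Let $d\ge1$ and let $p\in\mathcal P_d$ be nonzero. Then there exists $z_0\in\mathbb T$ such that, with $e_{j+1}=\frac1{\sqrt d}K_{z_0\nu^j}$ for $j=0,\dots,d-1$: (i) $\{e_j\}_{j=1}^d$ is an orthonormal basis of $\mathcal P_d$; (ii) $p$ is full with respect to this basis; and (iii) the values $\mathcal A_{\{e_j\}}(p)$ are determined by $\mathcal A(p)$, i.e. for every $q\in\mathcal P_d$ with $\mathcal A(q)=\mathcal A(p)$ one has $\mathcal A_{\{e_j\}}(q)=\mathcal A_{\{e_j\}}(p)$.
   Context: $\mathcal P_d$ is the space of complex polynomials of degree at most $d-1$ on the unit circle $\mathbb T$, with inner product $\langle p,q\rangle=\frac1{2\pi}\int_0^{2\pi}p(e^{it})\overline{q(e^{it})}dt$. For $w\in\mathbb T$, $K_w(z)=\sum_{j=0}^{d-1}\overline{w}^jz^j$, so that $\langle p,K_w\rangle=p(w)$. Let $\omega=e^{2\pi i/(2d-1)}$, $\nu=e^{2\pi i/d}$. The map $\mathcal A:\mathcal P_d\to\mathbb R^{6d-3}$ is $(\mathcal A(p))_j=|p(\omega^j)|^2$ ($1\le j\le 2d-1$), $|p(\omega^j)-p(\omega^j\nu)|^2$ ($2d\le j\le4d-2$), $|p(\omega^j)-ip(\omega^j\nu)|^2$ ($4d-1\le j\le 6d-3$). A vector $p$ is full with respect to a basis $\{e_j\}$ if $\langle p,e_j\rangle\ne0$ for all $j$. For a basis $\{e_j\}_{j=1}^d$ of $\mathcal P_d$, let $f_j=e_j$ ($1\le j\le d$),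 $f_j=e_{j-d}-e_{j-d+1}$ ($d+1\le j\le 2d-1$), $f_j=e_{j-(2d-1)}-ie_{j-(2d-1)+1}$ ($2d\le j\le 3d-2$), and $\mathcal A_{\{e_j\}}(q)=(|\langle q,f_j\rangle|^2)_{j=1}^{3d-2}$. *)

theory Defs
  imports "HOL-Analysis.Analysis" "HOL-Computational_Algebra.Polynomial"
begin

definition Pd :: "nat \<Rightarrow> complex poly set" where
  "Pd d = {p. degree p < d}"

definition ip :: "complex poly \<Rightarrow> complex poly \<Rightarrow> complex" where
  "ip p q = integral {0..2*pi} (\<lambda>t::real. poly p (exp (\<i> * of_real t)) * cnj (poly q (exp (\<i> * of_real t))))
            / complex_of_real (2*pi)"

definition Kker :: "nat \<Rightarrow> complex \<Rightarrow> complex poly" where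
  "Kker d w = (\<Sum>j<d. monom (cnj w ^ j) j)"

definition omega :: "nat \<Rightarrow> complex" where
  "omega d = exp (2 * of_real pi * \<i> / of_nat (2*d - 1))"

definition nu :: "nat \<Rightarrow> complex" where
  "nu d = exp (2 * of_real pi * \<i> / of_nat d)"

definition measA :: "nat \<Rightarrow> complex poly \<Rightarrow> nat \<Rightarrow> real" where
  "measA d p j =
    (if 1 \<le> j \<and> j \<le> 2*d - 1 then (cmod (poly p (omega d ^ j)))^2
     else if 2*d \<le> j \<and> j \<le> 4*d - 2 then
       (cmod (poly p (omega d ^ j) - poly p (omega d ^ j * nu d)))^2
     else if 4*d - 1 \<le> j \<and> j \<le> 6*d - 3 then
       (cmod (poly p (omega d ^ j) - \<i> * poly p (omega d ^ j * nu d)))^2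
     else 0)"

definition orthonormal_basis :: "nat \<Rightarrow> (nat \<Rightarrow> complex poly) \<Rightarrow> bool" where
  "orthonormal_basis d e \<longleftrightarrow>
     (\<forall>j\<in>{1..d}. e j \<in> Pd d) \<and>
     (\<forall>i\<in>{1..d}. \<forall>j\<in>{1..d}. ip (e i) (e j) = (if i = j then 1 else 0)) \<and>
     (\<forall>q\<in>Pd d. \<exists>c::nat \<Rightarrow> complex. q = (\<Sum>j\<in>{1..d}. smult (c j) (e j)))"

definition full :: "nat \<Rightarrow> complex poly \<Rightarrow> (nat \<Rightarrow> complex poly) \<Rightarrow> bool" where
  "full d p e \<longleftrightarrow> (\<forall>j\<in>{1..d}. ip p (e j) \<noteq> 0)"

definition fvec :: "nat \<Rightarrow> (nat \<Rightarrow> complex poly) \<Rightarrow> nat \<Rightarrow> complex poly" where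
  "fvec d e j =
    (if 1 \<le> j \<and> j \<le> d then e j
     else if d + 1 \<le> j \<and> j \<le> 2*d - 1 then e (j - d) - e (j - d + 1)
     else if 2*d \<le> j \<and> j \<le> 3*d - 2 then e (j - (2*d - 1)) - smult \<i> (e (j - (2*d - 1) + 1))
     else 0)"

definition measAe :: "nat \<Rightarrow> (nat \<Rightarrow> complex poly) \<Rightarrow> complex poly \<Rightarrow> nat \<Rightarrow> real" where
  "measAe d e q j = (if 1 \<le> j \<and> j \<le> 3*d - 2 then (cmod (ip q (fvec d e j)))^2 else 0)"

definition kbasis :: "nat \<Rightarrow> complex \<Rightarrow> nat \<Rightarrow> complex poly" where
  "kbasis d z0 j = smult (complex_of_real (1 / sqrt (real d))) (Kker d (z0 * nu d ^ (j - 1)))"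

end

theory Submission
  imports Defs
begin

text \<open>
  With e_(j+1) = K_(z0 nu^j) / sqrt d, the reproducing property gives <q, e_(j+1)> = q(z0 nu^j) / sqrt d,
  so orthonormality and completeness of this basis reduce to the orthogonality of the characters of the
  cyclic group of order d, and p is full as soon as z0 avoids the finitely many points z with
  p(z nu^k) = 0.

  On the circle, |q|^2 - |p|^2 equals z^(1-d) times a polynomial of degree at most 2d - 2; hence if
  |q| = |p| at the 2d - 1 points omega^j, then |q| = |p| on the whole circle. The three blocks of A(q)
  give this for q, for q - q(nu .) and for q - i q(nu .). The entries of A_e(q) are, up to the factor
  1/d, the values |q(w)|^2, |q(w) - q(w nu)|^2 and |q(w) + i q(w nu)|^2 at w = z0 nu^k; the first two
  are thus determined by A(q), and the last one by the parallelogram law.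
\<close>

section \<open>Roots of unity\<close>

definition unit_root :: "nat \<Rightarrow> complex" where
  "unit_root n = exp (2 * of_real pi * \<i> / of_nat n)"

lemma omega_eq_unit_root: "omega d = unit_root (2*d - 1)"
  unfolding omega_def unit_root_def by simp

lemma nu_eq_unit_root: "nu d = unit_root d"
  unfolding nu_def unit_root_def by simp

lemma unit_root_pow: "unit_root n ^ k = exp (2 * of_real pi * \<i> * of_nat k / of_nat n)"
  unfolding unit_root_def by (simp add: exp_of_nat_mult[symmetric] mult_ac)

lemma norm_unit_root [simp]: "cmod (unit_root n) = 1"
  unfolding unit_root_def by (simp add: norm_exp_eq_Re)

lemma unit_root_pow_self: "1 \<le> n \<Longrightarrow> unit_root n ^ n = 1"
  by (simp add: unit_root_pow complex_root_unity_eq_1)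

lemma inj_on_unit_root_pow:
  assumes "1 \<le> n"
  shows "inj_on (\<lambda>j. unit_root n ^ j) {s..<s+n}"
proof -
  have "j = k" if "j \<le> k" "j mod n = k mod n" "j \<in> {s..<s+n}" "k \<in> {s..<s+n}" for j k
  proof -
    have "n dvd k - j" "k - j < n" using that mod_eq_dvd_iff_nat[of j k n] by auto
    then show "j = k" using \<open>j \<le> k\<close> nat_dvd_not_less[of "k - j" n] by fastforce
  qed
  then show ?thesis
    unfolding inj_on_def unit_root_pow complex_root_unity_eq[OF assms] by (metis nat_le_linear)
qed

lemma cnj_mult_self_unit: "cmod x = 1 \<Longrightarrow> cnj x * x = 1"
  using complex_norm_square[of x] by (simp add: mult.commute)

lemma cnj_unit_mult_cancel: "cmod z = 1 \<Longrightarrow> cnj (z * a) * (z * b) = cnj a * b"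
  using cnj_mult_self_unit[of z] by (simp add: algebra_simps)

lemma sum_unit_root_char:
  assumes "1 \<le> n" "j < n" "k < n"
  shows "(\<Sum>m<n. (cnj (unit_root n ^ k) * unit_root n ^ j) ^ m) = (if j = k then of_nat n else 0)"
proof -
  define u where "u = unit_root n"
  define \<rho> where "\<rho> = cnj (u ^ k) * u ^ j"
  have unit: "cnj (u ^ i) * u ^ i = 1" for i
    by (rule cnj_mult_self_unit) (simp add: u_def norm_power)
  have "\<rho> ^ n = cnj ((u ^ n) ^ k) * (u ^ n) ^ j"
    unfolding \<rho>_def by (simp add: power_mult_distrib flip: power_mult complex_cnj_power) (simp add: mult.commute)
  then have "\<rho> ^ n = 1" using unit_root_pow_self[OF assms(1)] by (simp add: u_def)
  moreover have "\<rho> = 1 \<longleftrightarrow> j = k"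
  proof
    assume "\<rho> = 1"
    then have "u ^ j = u ^ k" using unit[of k] unfolding \<rho>_def
      by (metis mult.assoc mult_1 mult.commute)
    then show "j = k"
      using inj_on_unit_root_pow[OF assms(1), of 0] assms by (auto simp: u_def inj_on_def)
  qed (use unit[of k] in \<open>simp add: \<rho>_def\<close>)
  ultimately show ?thesis unfolding \<rho>_def[symmetric] u_def[symmetric] by (simp add: sum_gp_strict)
qed

section \<open>The inner product on the circle\<close>

lemma poly_eq_sum_lessThan:
  fixes p :: "'a::{comm_semiring_0,semiring_1} poly"
  assumes "degree p < N"
  shows "poly p x = (\<Sum>k<N. coeff p k * x ^ k)"
  by (subst poly_altdef, rule sum.mono_neutral_left) (use assms in \<open>auto simp: coeff_eq_0\<close>)

lemma has_integral_exp_int: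
  fixes n :: int
  shows "((\<lambda>t::real. exp (of_int n * \<i> * of_real t)) has_integral
           (if n = 0 then complex_of_real (2*pi) else 0)) {0..2*pi}"
proof (cases "n = 0")
  case True
  then show ?thesis using has_integral_const_real[of "1::complex" 0 "2*pi"]
    by (simp add: scaleR_conv_of_real)
next
  case False
  define c where "c = of_int n * \<i>"
  have "c \<noteq> 0" using False by (simp add: c_def)
  have "((\<lambda>t::real. exp (c * of_real t) / c) has_vector_derivative exp (c * of_real t))
          (at t within {0..2*pi})" for t
    using \<open>c \<noteq> 0\<close>
    by (intro has_vector_derivative_real_field[where f="\<lambda>z. exp (c*z)/c"]) (auto intro!: derivative_eq_intros)
  then have "((\<lambda>t::real. exp (c * of_real t)) has_integral
               (exp (c * of_real (2*pi)) / c - exp (c * of_real 0) / c)) {0..2*pi}"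
    by (intro fundamental_theorem_of_calculus) auto
  moreover have "exp (c * of_real (2*pi)) = 1"
    using exp_integer_2pi[of "of_int n"] by (simp add: c_def mult_ac)
  ultimately show ?thesis using False by (simp add: c_def)
qed

lemma poly_mult_cnj_poly_circle:
  assumes "degree p < N" "degree q < N"
  shows "poly p (exp (\<i> * of_real t)) * cnj (poly q (exp (\<i> * of_real t)))
       = (\<Sum>m<N. \<Sum>k<N. (coeff p m * cnj (coeff q k)) * exp (of_int (int m - int k) * \<i> * of_real t))"
proof -
  have pow: "exp (\<i> * of_real t) ^ m * cnj (exp (\<i> * of_real t)) ^ k = exp (of_int (int m - int k) * \<i> * of_real t)"
    for m k
    by (simp add: exp_of_nat_mult[symmetric] exp_cnj exp_add[symmetric] algebra_simps)
  then show ?thesis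
    unfolding poly_eq_sum_lessThan[OF assms(1)] poly_eq_sum_lessThan[OF assms(2)] cnj_sum sum_product
    by (intro sum.cong refl) (simp add: mult_ac flip: pow)
qed

lemma ip_eq_sum_coeff:
  assumes "degree p < N" "degree q < N"
  shows "ip p q = (\<Sum>k<N. coeff p k * cnj (coeff q k))"
proof -
  let ?c = "\<lambda>m k. coeff p m * cnj (coeff q k)"
  have "((\<lambda>t::real. poly p (exp (\<i> * of_real t)) * cnj (poly q (exp (\<i> * of_real t)))) has_integral
          (\<Sum>m<N. \<Sum>k<N. ?c m k * (if int m - int k = 0 then complex_of_real (2*pi) else 0))) {0..2*pi}"
    unfolding poly_mult_cnj_poly_circle[OF assms]
    by (intro has_integral_sum finite_lessThan has_integral_mult_right has_integral_exp_int)
  also have "(\<Sum>m<N. \<Sum>k<N. ?c m k * (if int m - int k = 0 then complex_of_real (2*pi) else 0))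
           = (\<Sum>m<N. complex_of_real (2*pi) * ?c m m)"
    by (intro sum.cong refl) (simp add: if_distrib[of "\<lambda>x. _ * x"] sum.delta cong: if_cong)
  finally show ?thesis
    unfolding ip_def by (simp add: integral_unique sum_distrib_left[symmetric])
qed

lemma ip_diff_right: "ip q (a - b) = ip q a - ip q b"
proof -
  define N where "N = Suc (max (degree q) (max (degree a) (degree b)))"
  have "degree q < N" "degree a < N" "degree b < N" "degree (a - b) < N"
    unfolding N_def using degree_diff_le_max[of a b] by auto
  then show ?thesis by (simp add: ip_eq_sum_coeff[of _ N] sum_subtractf algebra_simps)
qed

lemma ip_smult_right: "ip q (smult c a) = cnj c * ip q a"
proof -
  define N where "N = Suc (max (degree q) (degree a))"
  have "degree q < N" "degree a < N" "degree (smult c a) < N"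
    unfolding N_def by auto
  then show ?thesis by (simp add: ip_eq_sum_coeff[of _ N] sum_distrib_left mult_ac)
qed

section \<open>The kernel basis\<close>

lemma coeff_Kker: "coeff (Kker d w) k = (if k < d then cnj w ^ k else 0)"
  unfolding Kker_def by (simp add: coeff_sum coeff_monom)

lemma poly_Kker: "poly (Kker d w) y = (\<Sum>k<d. (cnj w * y) ^ k)"
  unfolding Kker_def by (simp add: poly_sum poly_monom power_mult_distrib)

lemma degree_Kker: "d \<ge> 1 \<Longrightarrow> degree (Kker d w) < d"
  using degree_le[of "d - 1" "Kker d w"] by (force simp: coeff_Kker)

lemma ip_Kker:
  assumes "degree q < d"
  shows "ip q (Kker d w) = poly q w"
  using assms by (simp add: ip_eq_sum_coeff[of _ d] degree_Kker coeff_Kker poly_eq_sum_lessThan[of _ d])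

lemma degree_kbasis: "d \<ge> 1 \<Longrightarrow> degree (kbasis d z0 j) < d"
  unfolding kbasis_def using degree_Kker by (meson degree_smult_le le_less_trans)

lemma ip_kbasis:
  assumes "degree q < d"
  shows "ip q (kbasis d z0 j) = of_real (1 / sqrt (real d)) * poly q (z0 * nu d ^ (j - 1))"
  using assms unfolding kbasis_def by (simp add: ip_smult_right ip_Kker)

lemma coeff_kbasis:
  "coeff (kbasis d z0 j) n = (if n < d then of_real (1 / sqrt (real d)) * cnj (z0 * nu d ^ (j - 1)) ^ n else 0)"
  unfolding kbasis_def by (simp add: coeff_Kker)

lemma of_real_inverse_sqrt_squared:
  "d \<ge> 1 \<Longrightarrow> complex_of_real (1 / sqrt (real d)) * complex_of_real (1 / sqrt (real d)) = 1 / of_nat d"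
  by (simp flip: of_real_mult add: of_real_divide[symmetric])

lemma ip_kbasis_kbasis:
  assumes d: "d \<ge> 1" and z0: "cmod z0 = 1" and i: "i \<in> {1..d}" and j: "j \<in> {1..d}"
  shows "ip (kbasis d z0 i) (kbasis d z0 j) = (if i = j then 1 else 0)"
proof -
  define s where "s = complex_of_real (1 / sqrt (real d))"
  have "ip (kbasis d z0 i) (kbasis d z0 j) = s * poly (kbasis d z0 i) (z0 * nu d ^ (j - 1))"
    unfolding s_def by (rule ip_kbasis[OF degree_kbasis[OF d]])
  also have "\<dots> = (s * s) * (\<Sum>k<d. (cnj (z0 * nu d ^ (i - 1)) * (z0 * nu d ^ (j - 1))) ^ k)"
    unfolding kbasis_def s_def poly_smult poly_Kker by (simp only: mult.assoc)
  also have "\<dots> = (s * s) * (if j - 1 = i - 1 then of_nat d else 0)"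
  proof -
    have "j - 1 < d" "i - 1 < d" using i j by auto
    then show ?thesis
      by (simp only: cnj_unit_mult_cancel[OF z0] nu_eq_unit_root sum_unit_root_char[OF d])
  qed
  also have "\<dots> = (if i = j then 1 else 0)"
    using i j d unfolding s_def of_real_inverse_sqrt_squared[OF d] by auto
  finally show ?thesis .
qed

lemma sum_rotated_unit_roots_pow_cnj_pow:
  assumes d: "d \<ge> 1" and mn: "m < d" "n < d" and z0: "cmod z0 = 1"
  shows "(\<Sum>j<d. (z0 * nu d ^ j) ^ m * cnj (z0 * nu d ^ j) ^ n) = (if m = n then of_nat d else 0)"
proof -
  have "(z0 * nu d ^ j) ^ m * cnj (z0 * nu d ^ j) ^ n
      = (z0 ^ m * cnj z0 ^ n) * (cnj (nu d ^ n) * nu d ^ m) ^ j" for j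
    by (simp add: power_mult_distrib flip: power_mult) (simp add: power_mult mult_ac)
  then have "(\<Sum>j<d. (z0 * nu d ^ j) ^ m * cnj (z0 * nu d ^ j) ^ n)
      = (z0 ^ m * cnj z0 ^ n) * (if m = n then of_nat d else 0)"
    using d mn by (simp only: sum_distrib_left[symmetric] nu_eq_unit_root sum_unit_root_char)
  also have "\<dots> = (if m = n then of_nat d else 0)"
    using cnj_mult_self_unit[of "z0 ^ n"] z0 by (simp add: norm_power mult.commute)
  finally show ?thesis .
qed

lemma kbasis_expansion:
  assumes d: "d \<ge> 1" and z0: "cmod z0 = 1" and q: "degree q < d"
  shows "q = (\<Sum>j\<in>{1..d}. smult (ip q (kbasis d z0 j)) (kbasis d z0 j))"
proof (rule poly_eqI)
  fix n
  define s where "s = complex_of_real (1 / sqrt (real d))"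
  define w where "w j = z0 * nu d ^ j" for j
  have coeff_expansion: "coeff (\<Sum>j\<in>{1..d}. smult (ip q (kbasis d z0 j)) (kbasis d z0 j)) n
      = (\<Sum>j\<in>{1..d}. ip q (kbasis d z0 j) * coeff (kbasis d z0 j) n)"
    by (simp only: coeff_sum coeff_smult)
  show "coeff q n = coeff (\<Sum>j\<in>{1..d}. smult (ip q (kbasis d z0 j)) (kbasis d z0 j)) n"
  proof (cases "n < d")
    case False
    then show ?thesis
      using q unfolding coeff_expansion by (simp add: kbasis_def coeff_Kker coeff_eq_0)
  next
    case True
    have "(\<Sum>j\<in>{1..d}. ip q (kbasis d z0 j) * coeff (kbasis d z0 j) n)
        = (s * s) * (\<Sum>j<d. poly q (w j) * cnj (w j) ^ n)"
      using True unfolding ip_kbasis[OF q] coeff_kbasis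
      by (simp add: sum.atLeast1_atMost_eq sum_distrib_left s_def w_def mult_ac)
    also have "(\<Sum>j<d. poly q (w j) * cnj (w j) ^ n)
        = (\<Sum>m<d. coeff q m * (\<Sum>j<d. w j ^ m * cnj (w j) ^ n))"
      unfolding poly_eq_sum_lessThan[OF q] sum_distrib_right sum_distrib_left
      by (subst sum.swap) (simp only: mult.assoc)
    also have "\<dots> = (\<Sum>m<d. coeff q m * (if m = n then of_nat d else 0))"
      unfolding w_def by (intro sum.cong refl) (subst sum_rotated_unit_roots_pow_cnj_pow[OF d _ True z0], auto)
    also have "\<dots> = coeff q n * of_nat d"
      using True by (simp add: if_distrib[of "\<lambda>x. coeff q _ * x"] sum.delta cong: if_cong)
    also have "(s * s) * (coeff q n * of_nat d) = coeff q n"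
      using d unfolding s_def of_real_inverse_sqrt_squared[OF d] by simp
    finally show ?thesis unfolding coeff_expansion by simp
  qed
qed

lemma orthonormal_basis_kbasis:
  assumes d: "d \<ge> 1" and z0: "cmod z0 = 1"
  shows "orthonormal_basis d (kbasis d z0)"
  unfolding orthonormal_basis_def Pd_def
proof (intro conjI ballI)
  fix q :: "complex poly" assume "q \<in> {p. degree p < d}"
  then show "\<exists>c. q = (\<Sum>j\<in>{1..d}. smult (c j) (kbasis d z0 j))"
    using kbasis_expansion[OF d z0] by (intro exI[of _ "\<lambda>j. ip q (kbasis d z0 j)"]) auto
qed (use degree_kbasis[OF d] ip_kbasis_kbasis[OF d z0] in auto)

lemma full_kbasis:
  assumes "degree p < d" and nonzero: "\<And>k. k < d \<Longrightarrow> poly p (z0 * nu d ^ k) \<noteq> 0"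
  shows "full d p (kbasis d z0)"
  unfolding full_def ip_kbasis[OF assms(1)]
proof
  fix j assume "j \<in> {1..d}"
  then have "poly p (z0 * nu d ^ (j - 1)) \<noteq> 0" by (intro nonzero) auto
  then show "complex_of_real (1 / sqrt (real d)) * poly p (z0 * nu d ^ (j - 1)) \<noteq> 0"
    using \<open>j \<in> {1..d}\<close> by simp
qed

section \<open>Moduli on the circle\<close>

definition reversed_conj :: "nat \<Rightarrow> complex poly \<Rightarrow> complex poly" where
  "reversed_conj d q = (\<Sum>k<d. monom (cnj (coeff q k)) (d - 1 - k))"

lemma degree_reversed_conj: "degree (reversed_conj d q) \<le> d - 1"
  unfolding reversed_conj_def by (intro degree_sum_le) (auto intro: order.trans[OF degree_monom_le])

lemma poly_reversed_conj:
  assumes "degree q < d" "cmod x = 1"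
  shows "poly (reversed_conj d q) x = x ^ (d - 1) * cnj (poly q x)"
proof -
  have "cnj (coeff q k) * x ^ (d - 1 - k) = x ^ (d - 1) * (cnj (coeff q k) * cnj x ^ k)" if "k < d" for k
  proof -
    have unit: "x ^ k * cnj x ^ k = 1"
      using cnj_mult_self_unit[of "x ^ k"] assms(2) by (simp add: norm_power mult.commute)
    have "x ^ (d - 1) = x ^ (d - 1 - k) * x ^ k" using that by (simp flip: power_add)
    then show ?thesis using unit by (metis mult.assoc mult.left_commute mult_1_right)
  qed
  then have "poly (reversed_conj d q) x = x ^ (d - 1) * (\<Sum>k<d. cnj (coeff q k) * cnj x ^ k)"
    unfolding reversed_conj_def poly_sum poly_monom sum_distrib_left by (intro sum.cong) auto
  then show ?thesis
    unfolding poly_eq_sum_lessThan[OF assms(1)] by simp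
qed

lemma cmod_poly_eq_on_circle:
  fixes q p :: "complex poly"
  assumes dq: "degree q < d" and dp: "degree p < d"
    and A: "finite A" "2*d - 1 \<le> card A" "\<And>y. y \<in> A \<Longrightarrow> cmod y = 1"
    and eq: "\<And>y. y \<in> A \<Longrightarrow> cmod (poly q y) = cmod (poly p y)"
    and x: "cmod x = 1"
  shows "cmod (poly q x) = cmod (poly p x)"
proof -
  define G where "G = q * reversed_conj d q - p * reversed_conj d p"
  have poly_G: "poly G y = y ^ (d - 1) * of_real ((cmod (poly q y))\<^sup>2 - (cmod (poly p y))\<^sup>2)"
    if "cmod y = 1" for y
  proof -
    have "poly G y = y ^ (d - 1) * (poly q y * cnj (poly q y) - poly p y * cnj (poly p y))"
      unfolding G_def poly_diff poly_mult poly_reversed_conj[OF dq that] poly_reversed_conj[OF dp that]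
      by (simp add: right_diff_distrib mult_ac)
    then show ?thesis by (simp only: of_real_diff complex_norm_square)
  qed
  have "degree (q * reversed_conj d q) \<le> 2*d - 2" "degree (p * reversed_conj d p) \<le> 2*d - 2"
    using degree_mult_le[of q "reversed_conj d q"] degree_mult_le[of p "reversed_conj d p"]
      degree_reversed_conj[of d q] degree_reversed_conj[of d p] dq dp by linarith+
  then have "degree G < card A"
    unfolding G_def using degree_diff_le_max[of "q * reversed_conj d q" "p * reversed_conj d p"] A(2) dq
    by linarith
  moreover have "poly G y = 0" if "y \<in> A" for y
    using poly_G A(3) eq that by simp
  ultimately have "G = 0"
    using A(1) by (intro poly_eqI_degree[of A]) auto
  then have "x ^ (d - 1) * of_real ((cmod (poly q x))\<^sup>2 - (cmod (poly p x))\<^sup>2) = 0"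
    using poly_G[OF x] by (metis poly_0)
  then have "(cmod (poly q x))\<^sup>2 - (cmod (poly p x))\<^sup>2 = 0"
    using x by (metis mult_eq_0_iff norm_zero of_real_eq_0_iff power_eq_0_iff zero_neq_one)
  then show ?thesis by (simp add: power2_eq_iff_nonneg)
qed

lemma cmod_poly_eq_on_circle_of_omega_block:
  fixes q p :: "complex poly"
  assumes "degree q < d" "degree p < d"
    and eq: "\<And>j. j \<in> {s..<s+(2*d-1)} \<Longrightarrow> cmod (poly q (omega d ^ j)) = cmod (poly p (omega d ^ j))"
    and "cmod x = 1"
  shows "cmod (poly q x) = cmod (poly p x)"
proof (rule cmod_poly_eq_on_circle[where A = "(\<lambda>j. omega d ^ j) ` {s..<s+(2*d-1)}"])
  have "inj_on (\<lambda>j. omega d ^ j) {s..<s+(2*d-1)}"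
    unfolding omega_eq_unit_root by (rule inj_on_unit_root_pow) (use assms(1) in simp)
  then show "2*d - 1 \<le> card ((\<lambda>j. omega d ^ j) ` {s..<s+(2*d-1)})"
    by (simp add: card_image)
qed (use assms in \<open>auto simp: omega_eq_unit_root norm_power\<close>)

section \<open>The measurement maps\<close>

lemma norm_nu [simp]: "cmod (nu d) = 1"
  by (simp add: nu_eq_unit_root)

lemma nu_neq_0: "nu d \<noteq> 0"
  by (metis norm_nu norm_zero zero_neq_one)

lemma measA_block:
  assumes "d \<ge> 1" "c \<in> {0, 1, \<i>}"
  obtains s where "\<And>r j. j \<in> {s..<s+(2*d-1)} \<Longrightarrow>
    measA d r j = (cmod (poly r (omega d ^ j) - c * poly r (omega d ^ j * nu d)))\<^sup>2"
proof -
  consider "c = 0" | "c = 1" | "c = \<i>" using assms(2) by blast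
  then show thesis
  proof cases
    case 1
    then show thesis using assms(1) by (intro that[of 1]) (auto simp: measA_def)
  next
    case 2
    then show thesis using assms(1) by (intro that[of "2*d"]) (auto simp: measA_def)
  next
    case 3
    then show thesis using assms(1) by (intro that[of "4*d-1"]) (auto simp: measA_def)
  qed
qed

lemma measA_eq_imp_cmod_eq:
  assumes dq: "degree q < d" and dp: "degree p < d" and eq: "measA d q = measA d p"
    and c: "c \<in> {0, 1, \<i>}" and x: "cmod x = 1"
  shows "cmod (poly q x - c * poly q (x * nu d)) = cmod (poly p x - c * poly p (x * nu d))"
proof -
  have d: "d \<ge> 1" using dq by simp
  define comb where "comb r = r - smult c (pcompose r [:0, nu d:])" for r
  have poly_comb: "poly (comb r) y = poly r y - c * poly r (y * nu d)" for r y
    by (simp add: comb_def poly_pcompose mult.commute)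
  have degree_comb: "degree (comb r) < d" if "degree r < d" for r
  proof -
    have "degree (smult c (pcompose r [:0, nu d:])) < d"
      using that degree_smult_le[of c "pcompose r [:0, nu d:]"] by (simp add: degree_pcompose nu_neq_0)
    then show ?thesis
      unfolding comb_def using that degree_diff_le_max[of r "smult c (pcompose r [:0, nu d:])"] by linarith
  qed
  obtain s where block: "\<And>r j. j \<in> {s..<s+(2*d-1)} \<Longrightarrow>
      measA d r j = (cmod (poly (comb r) (omega d ^ j)))\<^sup>2"
    using measA_block[OF d c] unfolding poly_comb by blast
  have "cmod (poly (comb q) x) = cmod (poly (comb p) x)"
  proof (rule cmod_poly_eq_on_circle_of_omega_block[OF degree_comb[OF dq] degree_comb[OF dp] _ x])
    fix j assume "j \<in> {s..<s+(2*d-1)}"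
    then show "cmod (poly (comb q) (omega d ^ j)) = cmod (poly (comb p) (omega d ^ j))"
      using block[of j q] block[of j p] eq by (simp add: power2_eq_iff_nonneg)
  qed
  then show ?thesis by (simp add: poly_comb)
qed

lemma cmod_add_i_mult_squared:
  "(cmod (u + \<i> * v))\<^sup>2 = 2 * (cmod u)\<^sup>2 + 2 * (cmod v)\<^sup>2 - (cmod (u - \<i> * v))\<^sup>2"
  by (simp only: cmod_power2) (simp add: power2_eq_square algebra_simps)

lemma measA_eq_imp_cmod_add_eq:
  assumes dq: "degree q < d" and dp: "degree p < d" and eq: "measA d q = measA d p"
    and c: "c \<in> {0, -1, \<i>}" and x: "cmod x = 1"
  shows "cmod (poly q x + c * poly q (x * nu d)) = cmod (poly p x + c * poly p (x * nu d))"
proof -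
  note cmod_eq = measA_eq_imp_cmod_eq[OF dq dp eq]
  have "cmod (x * nu d) = 1" using x by (simp add: norm_mult)
  then have mod_shift: "cmod (poly q (x * nu d)) = cmod (poly p (x * nu d))"
    using cmod_eq[of 0 "x * nu d"] by simp
  have mod_q: "cmod (poly q x) = cmod (poly p x)" using cmod_eq[of 0 x] x by simp
  have mod_diff: "cmod (poly q x - poly q (x * nu d)) = cmod (poly p x - poly p (x * nu d))"
    using cmod_eq[of 1 x] x by simp
  have mod_diff_i: "cmod (poly q x - \<i> * poly q (x * nu d)) = cmod (poly p x - \<i> * poly p (x * nu d))"
    using cmod_eq[of \<i> x] x by simp
  consider "c = 0" | "c = -1" | "c = \<i>" using c by blast
  then show ?thesis
  proof cases
    case 3
    have "(cmod (poly q x + \<i> * poly q (x * nu d)))\<^sup>2 = (cmod (poly p x + \<i> * poly p (x * nu d)))\<^sup>2"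
      unfolding cmod_add_i_mult_squared mod_q mod_shift mod_diff_i ..
    then show ?thesis using 3 by (simp add: power2_eq_iff_nonneg)
  qed (use mod_q mod_diff in simp_all)
qed

lemma fvec_low: "1 \<le> j \<Longrightarrow> j \<le> d \<Longrightarrow> fvec d e j = e j"
  unfolding fvec_def by simp

lemma fvec_mid: "d + Suc m \<le> 2*d - 1 \<Longrightarrow> fvec d e (d + Suc m) = e (Suc m) - e (Suc (Suc m))"
  unfolding fvec_def by simp

lemma fvec_high:
  assumes "d \<ge> 1" "2*d + m \<le> 3*d - 2"
  shows "fvec d e (2*d + m) = e (Suc m) - smult \<i> (e (Suc (Suc m)))"
proof -
  have "d \<ge> 2" "\<not> 2*d + m \<le> 2*d - 1" "2*d + m - (2*d - 1) = Suc m" using assms by linarith+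
  then show ?thesis using assms unfolding fvec_def by simp
qed

lemma ip_fvec_kbasis:
  assumes j: "1 \<le> j" "j \<le> 3*d - 2"
  obtains k c where "c \<in> {0, -1, \<i>}"
    "\<And>r. degree r < d \<Longrightarrow> ip r (fvec d (kbasis d z0) j)
        = of_real (1 / sqrt (real d)) * (poly r (z0 * nu d ^ k) + c * poly r (z0 * nu d ^ k * nu d))"
proof -
  define s where "s = complex_of_real (1 / sqrt (real d))"
  have ip_e: "ip r (kbasis d z0 (Suc m)) = s * poly r (z0 * nu d ^ m)" if "degree r < d" for r m
    using ip_kbasis[OF that] by (simp add: s_def)
  have shift: "z0 * nu d ^ Suc m = z0 * nu d ^ m * nu d" for m
    by (simp add: mult.assoc)
  consider "j \<le> d" | m where "j = d + Suc m" "j \<le> 2*d - 1" | m where "j = 2*d + m"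
  proof -
    consider "j \<le> d" | "d < j" "j \<le> 2*d - 1" | "2*d \<le> j" using j by linarith
    then show thesis
    proof cases
      case 2
      then show thesis using that(2)[of "j - d - 1"] by simp
    next
      case 3
      then show thesis using that(3)[of "j - 2*d"] by simp
    qed (use that in blast)
  qed
  then show thesis
  proof cases
    case 1
    then obtain m where m: "j = Suc m" using j not0_implies_Suc by fastforce
    have "ip r (fvec d (kbasis d z0) j) = s * (poly r (z0 * nu d ^ m) + 0 * poly r (z0 * nu d ^ m * nu d))"
      if "degree r < d" for r
      using 1 j unfolding m by (simp add: fvec_low ip_e[OF that])
    then show thesis using that[of 0 m] by (simp add: s_def)
  next
    case (2 m)
    then have fv: "fvec d (kbasis d z0) j = kbasis d z0 (Suc m) - kbasis d z0 (Suc (Suc m))"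
      using fvec_mid[of d m] by simp
    have "ip r (fvec d (kbasis d z0) j) = s * (poly r (z0 * nu d ^ m) + (-1) * poly r (z0 * nu d ^ m * nu d))"
      if "degree r < d" for r
      unfolding fv ip_diff_right ip_e[OF that] shift by (simp add: right_diff_distrib)
    then show thesis using that[of "-1" m] by (simp add: s_def)
  next
    case (3 m)
    have "d \<ge> 1" using j by linarith
    then have fv: "fvec d (kbasis d z0) j = kbasis d z0 (Suc m) - smult \<i> (kbasis d z0 (Suc (Suc m)))"
      using 3 j fvec_high by blast
    have "ip r (fvec d (kbasis d z0) j) = s * (poly r (z0 * nu d ^ m) + \<i> * poly r (z0 * nu d ^ m * nu d))"
      if "degree r < d" for r
      unfolding fv ip_diff_right ip_smult_right ip_e[OF that] shift by (simp add: algebra_simps)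
    then show thesis using that[of \<i> m] by (simp add: s_def)
  qed
qed

lemma measAe_kbasis_eq:
  assumes z0: "cmod z0 = 1" and dq: "degree q < d" and dp: "degree p < d"
    and cmod_eq: "\<And>c x. c \<in> {0, -1, \<i>} \<Longrightarrow> cmod x = 1 \<Longrightarrow>
      cmod (poly q x + c * poly q (x * nu d)) = cmod (poly p x + c * poly p (x * nu d))"
  shows "measAe d (kbasis d z0) q = measAe d (kbasis d z0) p"
proof
  fix j
  show "measAe d (kbasis d z0) q j = measAe d (kbasis d z0) p j"
  proof (cases "1 \<le> j \<and> j \<le> 3*d - 2")
    case True
    then have j: "1 \<le> j" "j \<le> 3*d - 2" by auto
    show ?thesis
    proof (rule ip_fvec_kbasis[of j d z0, OF j])
      fix k c
      assume c: "c \<in> {0, -1, \<i>}" and ip: "\<And>r. degree r < d \<Longrightarrow> ip r (fvec d (kbasis d z0) j)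
        = of_real (1 / sqrt (real d)) * (poly r (z0 * nu d ^ k) + c * poly r (z0 * nu d ^ k * nu d))"
      have "cmod (z0 * nu d ^ k) = 1" using z0 by (simp add: norm_mult norm_power)
      from cmod_eq[OF c this] show ?thesis
        unfolding measAe_def ip[OF dq] ip[OF dp] norm_mult by (simp only:)
    qed
  qed (auto simp: measAe_def)
qed

lemma exists_unit_notin_finite:
  assumes "finite B"
  obtains z :: complex where "cmod z = 1" "z \<notin> B"
proof -
  have "card {z::complex. z ^ Suc (card B) = 1} = Suc (card B)"
    by (rule card_roots_unity_eq) simp
  then have "\<not> {z::complex. z ^ Suc (card B) = 1} \<subseteq> B"
    using card_mono[OF assms] by (metis Suc_n_not_le_n)
  then obtain z :: complex where z: "z ^ Suc (card B) = 1" "z \<notin> B" by blast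
  then have "cmod z ^ Suc (card B) = 1" by (metis norm_one norm_power)
  then have "cmod z = 1"
    by (metis norm_ge_zero power_eq_imp_eq_base power_one zero_le_one zero_less_Suc)
  with z show thesis by (intro that)
qed

lemma finite_rotated_roots:
  fixes p :: "complex poly"
  assumes "p \<noteq> 0" "u \<noteq> 0"
  shows "finite {z. \<exists>k<d. poly p (z * u ^ k) = 0}"
proof -
  have "{z. \<exists>k<d. poly p (z * u ^ k) = 0} \<subseteq> (\<Union>k<d. (\<lambda>y. y / u ^ k) ` {y. poly p y = 0})"
    using assms(2) by (force simp: image_iff)
  moreover have "finite (\<Union>k<d. (\<lambda>y. y / u ^ k) ` {y. poly p y = 0})"
    using poly_roots_finite[OF assms(1)] by blast
  ultimately show ?thesis by (rule finite_subset)
qed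

theorem mainTheorem5:
  fixes d :: nat and p :: "complex poly"
  assumes "d \<ge> 1" and "p \<in> Pd d" and "p \<noteq> 0"
  shows "\<exists>z0. cmod z0 = 1 \<and>
           orthonormal_basis d (kbasis d z0) \<and>
           full d p (kbasis d z0) \<and>
           (\<forall>q\<in>Pd d. measA d q = measA d p \<longrightarrow> measAe d (kbasis d z0) q = measAe d (kbasis d z0) p)"
proof -
  have d: "d \<ge> 1" and dp: "degree p < d" using assms by (auto simp: Pd_def)
  obtain z0 where z0: "cmod z0 = 1" and "z0 \<notin> {z. \<exists>k<d. poly p (z * nu d ^ k) = 0}"
    using exists_unit_notin_finite[OF finite_rotated_roots[OF assms(3) nu_neq_0]] .
  then have nonzero: "poly p (z0 * nu d ^ k) \<noteq> 0" if "k < d" for k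
    using that by blast
  have "full d p (kbasis d z0)"
    using dp nonzero by (rule full_kbasis)
  moreover have "measAe d (kbasis d z0) q = measAe d (kbasis d z0) p"
    if "q \<in> Pd d" and eq: "measA d q = measA d p" for q
  proof -
    have dq: "degree q < d" using that(1) by (simp add: Pd_def)
    show ?thesis
      by (rule measAe_kbasis_eq[OF z0 dq dp measA_eq_imp_cmod_add_eq[OF dq dp eq]])
  qed
  ultimately show ?thesis
    using z0 orthonormal_basis_kbasis[OF d z0] by blast
qed

end
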